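(* There is $C_0=C_0(N)>0$ such that for every $T>0$, every $f\in\mathcal{VT}_1^+(T)$ and every $\mathbf{x}_0\in\mathbb{R}^N$, $$f(\mathbf{x}_0)\le C_0T^{-\frac N2}\int_{B_{\sqrt T}(\mathbf{x}_0)}f\,d\mathcal{L}^N\le C_0T^{-\frac N2}.$$
   Context: For positive $U\in C^2(\mathbb{R}^N)$, $\tau(U)=\sup\{\tau\ge0:2\tau\nabla^2\log U+g_{\mathbb{R}}\ge0\}$ (inequality of symmetric matrices); $\mathcal{VT}_1^+(T)=\{u\in C^2\cap L^1(\mathbb{R}^N):u>0,\tau(u)\ge T,\int_{\mathbb{R}^N}u\,d\mathcal{L}^N=1\}$. *)

theory Defs
  imports "HOL-Analysis.Analysis"
begin

definition dderiv :: "('a::euclidean_space \<Rightarrow> real) \<Rightarrow> 'a \<Rightarrow> 'a \<Rightarrow> real" where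
  "dderiv f v x = frechet_derivative f (at x) v"

definition hess :: "('a::euclidean_space \<Rightarrow> real) \<Rightarrow> 'a \<Rightarrow> 'a \<Rightarrow> 'a \<Rightarrow> real" where
  "hess f x v w = dderiv (dderiv f v) w x"

definition C2 :: "('a::euclidean_space \<Rightarrow> real) \<Rightarrow> bool" where
  "C2 f \<longleftrightarrow> (\<forall>x. f differentiable (at x))
     \<and> (\<forall>v x. (dderiv f v) differentiable (at x))
     \<and> (\<forall>v w. continuous_on UNIV (\<lambda>x. hess f x v w))"

definition tau :: "('a::euclidean_space \<Rightarrow> real) \<Rightarrow> ereal" where
  "tau U = (SUP t \<in> {t::real. t \<ge> 0 \<and>
      (\<forall>x v. 2 * t * hess (\<lambda>y. ln (U y)) x v v + inner v v \<ge> 0)}. ereal t)"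

definition VT1 :: "real \<Rightarrow> ('a::euclidean_space \<Rightarrow> real) set" where
  "VT1 T = {u. C2 u \<and> integrable lborel u \<and> (\<forall>x. u x > 0) \<and> tau u \<ge> ereal T
              \<and> (\<integral>x. u x \<partial>lborel) = 1}"

end

(* If tau f >= T, then Hess (ln f) >= -1/(2T), so s |-> ln f (x + s h) + s^2 |h|^2 / (4T) is
   convex.  Comparing its values at s = 0 and s = +-1 gives, for |h| < sqrt T,
     f x <= exp (1/4) * sqrt (f (x + h) * f (x - h)) <= exp (1/4) * (f (x + h) + f (x - h)) / 2.
   Integrating over the ball B of radius sqrt T around x, which the point reflection y |-> 2x - y
   maps onto itself preserving Lebesgue measure, yields |B| f x <= exp (1/4) * int_B f with
   |B| = omega_N T^(N/2).  The second inequality is int_B f <= int f = 1. *)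

theory Submission
  imports Defs
begin

lemma has_real_derivative_dderiv_along_line:
  fixes g :: "'a::euclidean_space \<Rightarrow> real"
  assumes "g differentiable at (x + s *\<^sub>R h)"
  shows "((\<lambda>s. g (x + s *\<^sub>R h)) has_real_derivative dderiv g h (x + s *\<^sub>R h)) (at s)"
proof -
  let ?D = "frechet_derivative g (at (x + s *\<^sub>R h))"
  have outer: "(g has_derivative ?D) (at (x + s *\<^sub>R h))"
    using assms frechet_derivative_works by blast
  have inner: "((\<lambda>s. x + s *\<^sub>R h) has_derivative (\<lambda>t. t *\<^sub>R h)) (at s)"
    by (auto intro!: derivative_eq_intros)
  have chain: "((\<lambda>s. g (x + s *\<^sub>R h)) has_derivative (\<lambda>t. ?D (t *\<^sub>R h))) (at s)"
    using diff_chain_at[OF inner outer] by (simp add: o_def)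
  have "linear ?D"
    using assms linear_frechet_derivative by blast
  then have "(\<lambda>t. ?D (t *\<^sub>R h)) = (*) (dderiv g h (x + s *\<^sub>R h))"
    by (auto simp: dderiv_def linear_cmul)
  with chain show ?thesis
    by (simp only: has_field_derivative_def)
qed

lemma has_derivative_ln_dderiv:
  fixes u :: "'a::euclidean_space \<Rightarrow> real"
  assumes "u differentiable at x" "u x > 0"
  shows "((\<lambda>y. ln (u y)) has_derivative (\<lambda>v. dderiv u v x / u x)) (at x)"
  using has_derivative_ln[OF assms(2) assms(1)[unfolded frechet_derivative_works]]
  by (simp add: dderiv_def field_simps)

lemma dderiv_ln:
  fixes u :: "'a::euclidean_space \<Rightarrow> real"
  assumes "u differentiable at x" "u x > 0"
  shows "dderiv (\<lambda>y. ln (u y)) v x = dderiv u v x / u x"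
  unfolding dderiv_def frechet_derivative_at[OF has_derivative_ln_dderiv[OF assms], symmetric]
  by (simp add: dderiv_def)

lemma tau_le_if_hess_ln_neg:
  fixes U :: "'a::euclidean_space \<Rightarrow> real"
  assumes "hess (\<lambda>y. ln (U y)) x v v < 0"
  shows "tau U \<le> ereal (inner v v / (- 2 * hess (\<lambda>y. ln (U y)) x v v))"
  unfolding tau_def
proof (rule SUP_least)
  let ?H = "hess (\<lambda>y. ln (U y)) x v v"
  fix t assume "t \<in> {t. t \<ge> 0 \<and> (\<forall>x v. 2 * t * hess (\<lambda>y. ln (U y)) x v v + inner v v \<ge> 0)}"
  then have "2 * t * ?H + inner v v \<ge> 0"
    by blast
  then have "t * (- 2 * ?H) \<le> inner v v"
    by (simp add: algebra_simps)
  moreover have "- 2 * ?H > 0"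
    using assms by simp
  ultimately show "ereal t \<le> ereal (inner v v / (- 2 * ?H))"
    by (simp only: pos_le_divide_eq ereal_less_eq)
qed

lemma hess_ln_ge_if_tau_ge:
  fixes U :: "'a::euclidean_space \<Rightarrow> real"
  assumes "tau U \<ge> ereal T" "T > 0"
  shows "2 * T * hess (\<lambda>y. ln (U y)) x v v + inner v v \<ge> 0"
proof (rule ccontr)
  let ?H = "hess (\<lambda>y. ln (U y)) x v v"
  assume "\<not> ?thesis"
  then have neg: "inner v v < T * (- 2 * ?H)"
    by (simp add: algebra_simps)
  then have "0 < T * (- 2 * ?H)"
    using inner_ge_zero[of v] by linarith
  then have "?H < 0"
    using assms(2) by (simp add: mult_less_0_iff)
  then have "ereal T \<le> ereal (inner v v / (- 2 * ?H))"
    using assms(1) tau_le_if_hess_ln_neg order_trans by blast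
  moreover have "- 2 * ?H > 0"
    using \<open>?H < 0\<close> by simp
  ultimately have "T * (- 2 * ?H) \<le> inner v v"
    by (simp only: ereal_less_eq pos_le_divide_eq)
  with neg show False
    by linarith
qed

lemma convex_on_ln_plus_quadratic_along_line:
  fixes f :: "'a::euclidean_space \<Rightarrow> real"
  assumes "C2 f" "\<And>y. f y > 0" "tau f \<ge> ereal T" "T > 0"
  shows "convex_on UNIV (\<lambda>s. ln (f (x + s *\<^sub>R h)) + s\<^sup>2 * (inner h h / (4 * T)))"
proof -
  define L where "L = (\<lambda>y. ln (f y))"
  define c where "c = inner h h / (4 * T)"
  have f_diff: "f differentiable at y" for y
    using assms(1) by (simp add: C2_def)
  have L_diff: "L differentiable at y" for y
    unfolding L_def differentiable_def using has_derivative_ln_dderiv[OF f_diff assms(2)] by blast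
  have DL: "dderiv L h = (\<lambda>y. dderiv f h y / f y)"
    unfolding L_def using dderiv_ln[OF f_diff assms(2)] by blast
  have DL_diff: "dderiv L h differentiable at y" for y
    unfolding DL using assms(1,2) unfolding C2_def
    by (intro differentiable_divide) (auto simp: less_imp_neq[symmetric])
  have D1: "((\<lambda>s. L (x + s *\<^sub>R h) + s\<^sup>2 * c) has_real_derivative
      dderiv L h (x + s *\<^sub>R h) + 2 * s * c) (at s)" for s
    by (intro DERIV_add has_real_derivative_dderiv_along_line L_diff)
      (auto intro!: derivative_eq_intros)
  have D2: "((\<lambda>s. dderiv L h (x + s *\<^sub>R h) + 2 * s * c) has_real_derivative
      hess L (x + s *\<^sub>R h) h h + 2 * c) (at s)" for s
    unfolding hess_def
    by (intro DERIV_add has_real_derivative_dderiv_along_line DL_diff)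
      (auto intro!: derivative_eq_intros)
  have D2_nonneg: "hess L (x + s *\<^sub>R h) h h + 2 * c \<ge> 0" for s
  proof -
    have "2 * T * hess L (x + s *\<^sub>R h) h h + inner h h \<ge> 0"
      unfolding L_def by (rule hess_ln_ge_if_tau_ge[OF assms(3,4)])
    then have "2 * T * (hess L (x + s *\<^sub>R h) h h + 2 * c) \<ge> 0"
      using assms(4) by (simp add: c_def algebra_simps)
    then show ?thesis
      using assms(4) by (simp add: zero_le_mult_iff)
  qed
  show ?thesis
    using f''_ge0_imp_convex[OF convex_UNIV D1 D2 D2_nonneg]
    by (simp add: L_def c_def)
qed

lemma le_exp_mult_mean_if_ln_le:
  fixes a b y c :: real
  assumes "a > 0" "b > 0" "y > 0" "ln y \<le> (ln a + ln b) / 2 + c"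
  shows "y \<le> exp c * ((a + b) / 2)"
proof -
  have "ln y \<le> ln (sqrt (a * b)) + c"
    using assms by (simp add: ln_sqrt ln_mult)
  then have "y \<le> exp (ln (sqrt (a * b)) + c)"
    using assms(3) by (metis exp_le_cancel_iff exp_ln)
  also have "\<dots> = exp c * sqrt (a * b)"
    using assms by (simp add: exp_add)
  also have "\<dots> \<le> exp c * ((a + b) / 2)"
    using arith_geo_mean_sqrt[of a b] assms by simp
  finally show ?thesis .
qed

lemma VT1_le_exp_mult_midpoint_mean:
  fixes f :: "'a::euclidean_space \<Rightarrow> real"
  assumes "f \<in> VT1 T" "T > 0" "norm h < sqrt T"
  shows "f x \<le> exp (1/4) * ((f (x + h) + f (x - h)) / 2)"
proof -
  have f: "C2 f" "\<And>y. f y > 0" "tau f \<ge> ereal T"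
    using assms(1) by (auto simp: VT1_def)
  define \<psi> where "\<psi> = (\<lambda>s. ln (f (x + s *\<^sub>R h)) + s\<^sup>2 * (inner h h / (4 * T)))"
  have "\<psi> ((1 - 1/2) *\<^sub>R 1 + (1/2) *\<^sub>R (-1)) \<le> (1 - 1/2) * \<psi> 1 + (1/2) * \<psi> (-1)"
    unfolding \<psi>_def
    by (rule convex_onD[OF convex_on_ln_plus_quadratic_along_line[OF f assms(2)]]) auto
  then have ln_le: "ln (f x) \<le> (ln (f (x + h)) + ln (f (x - h))) / 2 + inner h h / (4 * T)"
    by (simp add: \<psi>_def algebra_simps add_divide_distrib)
  have "(norm h)\<^sup>2 < (sqrt T)\<^sup>2"
    using assms(3) by (intro power_strict_mono) auto
  then have "inner h h < T"
    using assms(2) by (simp add: power2_norm_eq_inner)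
  then have "inner h h / (4 * T) < 1/4"
    using assms(2) by (simp add: divide_less_eq)
  then show ?thesis
    using ln_le f(2) by (intro le_exp_mult_mean_if_ln_le) auto
qed

lemma lborel_distr_point_reflection:
  fixes x :: "'a::euclidean_space"
  shows "distr lborel borel (\<lambda>y. 2 *\<^sub>R x - y) = lborel"
  using lborel_affine[of "-1" "2 *\<^sub>R x"] by (simp add: density_1)

lemma integrable_point_reflection:
  fixes g :: "'a::euclidean_space \<Rightarrow> real"
  assumes "integrable lborel g"
  shows "integrable lborel (\<lambda>y. g (2 *\<^sub>R x - y))"
  using integrable_distr_eq[of "\<lambda>y. 2 *\<^sub>R x - y" lborel borel g] assms
  by (simp add: lborel_distr_point_reflection)

lemma integral_point_reflection:
  fixes g :: "'a::euclidean_space \<Rightarrow> real"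
  assumes "g \<in> borel_measurable borel"
  shows "(\<integral>y. g (2 *\<^sub>R x - y) \<partial>lborel) = (\<integral>y. g y \<partial>lborel)"
  using integral_distr[of "\<lambda>y. 2 *\<^sub>R x - y" lborel borel g] assms
  by (simp add: lborel_distr_point_reflection)

lemma point_reflection_mem_ball_iff:
  fixes x y :: "'a::real_normed_vector"
  shows "2 *\<^sub>R x - y \<in> ball x r \<longleftrightarrow> y \<in> ball x r"
proof -
  have "x - (2 *\<^sub>R x - y) = - (x - y)"
    by (simp add: scaleR_2 algebra_simps)
  then have "dist x (2 *\<^sub>R x - y) = dist x y"
    by (simp only: dist_norm norm_minus_cancel)
  then show ?thesis
    by simp
qed

lemma measure_ball_mult_le_set_integral_if_midpoint_le:
  fixes g :: "'a::euclidean_space \<Rightarrow> real"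
  assumes g: "integrable lborel g"
    and midpoint: "\<And>h. norm h < r \<Longrightarrow> g x \<le> K * ((g (x + h) + g (x - h)) / 2)"
  shows "measure lborel (ball x r) * g x \<le> K * (\<integral>y\<in>ball x r. g y \<partial>lborel)"
proof -
  define gB where "gB = (\<lambda>y. indicator (ball x r) y * g y)"
  have gB: "integrable lborel gB"
    unfolding gB_def using integrable_mult_indicator[OF _ g] by simp
  have pointwise: "indicator (ball x r) y * g x \<le> K / 2 * (gB y + gB (2 *\<^sub>R x - y))" for y
  proof (cases "y \<in> ball x r")
    case True
    then have "norm (y - x) < r"
      by (simp add: dist_norm norm_minus_commute)
    moreover have reflection: "x - (y - x) = 2 *\<^sub>R x - y"
      by (simp add: scaleR_2 algebra_simps)
    ultimately show ?thesis
      using midpoint[of "y - x"] True point_reflection_mem_ball_iff[of x y r]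
      by (simp add: gB_def reflection)
  next
    case False
    then show ?thesis
      using point_reflection_mem_ball_iff[of x y r] by (simp add: gB_def)
  qed
  have ball: "integrable lborel (indicator (ball x r) :: 'a \<Rightarrow> real)"
    by (rule integrable_real_indicator[OF _ emeasure_lborel_ball_finite]) simp
  have "measure lborel (ball x r) * g x = (\<integral>y. indicator (ball x r) y * g x \<partial>lborel)"
    by simp
  also have "\<dots> \<le> (\<integral>y. K / 2 * (gB y + gB (2 *\<^sub>R x - y)) \<partial>lborel)"
    using pointwise ball gB integrable_point_reflection[OF gB]
    by (intro integral_mono) auto
  also have "\<dots> = K * (\<integral>y. gB y \<partial>lborel)"
    using gB integrable_point_reflection[OF gB] integral_point_reflection[of gB x] by simp
  also have "(\<integral>y. gB y \<partial>lborel) = (\<integral>y\<in>ball x r. g y \<partial>lborel)"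
    by (simp add: gB_def set_lebesgue_integral_def)
  finally show ?thesis .
qed

lemma set_integral_le_integral_if_nonneg:
  fixes g :: "'a \<Rightarrow> real"
  assumes "integrable M g" "A \<in> sets M" "\<And>x. g x \<ge> 0"
  shows "(\<integral>x\<in>A. g x \<partial>M) \<le> (\<integral>x. g x \<partial>M)"
  unfolding set_lebesgue_integral_def
  using assms integrable_mult_indicator[OF assms(2,1)]
  by (intro integral_mono) (auto simp: indicator_def)

lemma VT1_measure_ball_mult_le_set_integral:
  fixes f :: "'a::euclidean_space \<Rightarrow> real"
  assumes "f \<in> VT1 T" "T > 0"
  shows "unit_ball_vol DIM('a) * T powr (DIM('a) / 2) * f x
    \<le> exp (1/4) * (\<integral>y\<in>ball x (sqrt T). f y \<partial>lborel)"
proof -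
  have "measure lborel (ball x (sqrt T)) = unit_ball_vol DIM('a) * T powr (DIM('a) / 2)"
    using assms(2) by (simp add: content_ball real_sqrt_power powr_half_sqrt_powr powr_realpow)
  moreover have "integrable lborel f"
    using assms(1) by (simp add: VT1_def)
  ultimately show ?thesis
    using measure_ball_mult_le_set_integral_if_midpoint_le VT1_le_exp_mult_midpoint_mean[OF assms]
    by metis
qed

theorem mainTheorem14:
  shows "\<exists>C0::real. C0 > 0 \<and>
    (\<forall>T::real. T > 0 \<longrightarrow> (\<forall>f \<in> (VT1 T :: ('a::euclidean_space \<Rightarrow> real) set). \<forall>x0::'a.
       f x0 \<le> C0 * T powr (- real DIM('a) / 2) * (\<integral>x\<in>ball x0 (sqrt T). f x \<partial>lborel)
     \<and> C0 * T powr (- real DIM('a) / 2) * (\<integral>x\<in>ball x0 (sqrt T). f x \<partial>lborel)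
         \<le> C0 * T powr (- real DIM('a) / 2)))"
proof (intro exI[of _ "exp (1/4) / unit_ball_vol DIM('a)"] conjI allI impI ballI)
  show "exp (1/4) / unit_ball_vol DIM('a) > 0"
    by simp
  fix T :: real and f :: "'a \<Rightarrow> real" and x0 :: 'a
  assume T: "T > 0" and f: "f \<in> VT1 T"
  let ?C = "exp (1/4) / unit_ball_vol DIM('a) * T powr (- real DIM('a) / 2)"
  let ?I = "\<integral>x\<in>ball x0 (sqrt T). f x \<partial>lborel"
  show "f x0 \<le> ?C * ?I"
    using VT1_measure_ball_mult_le_set_integral[OF f T, of x0] T
    by (simp add: powr_minus field_simps)
  have "?I \<le> 1"
    using set_integral_le_integral_if_nonneg[of lborel f "ball x0 (sqrt T)"] f
    by (auto simp: VT1_def less_imp_le)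
  moreover have "?C \<ge> 0"
    by simp
  ultimately show "?C * ?I \<le> ?C"
    by (rule mult_left_le)
qed

end
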